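(* Let $\mathbf{F}_q$ have characteristic $p$ and let $1\le k\le q$. If $p\nmid k$, then $M(k,b,\mathbf{F}_q)=M(k,0,\mathbf{F}_q)=\frac1q(q)_k$ for all $b\in\mathbf{F}_q$. If $p\mid k$, then $M(k,b,\mathbf{F}_q)=q\,M(k-1,b,\mathbf{F}_q^* )$ for all $b\in\mathbf{F}_q$.
   Context: $M(k,b,D)$ denotes the number of ordered $k$-tuples $(x_1,\dots,x_k)$ of pairwise distinct elements of $D\subseteq\mathbf{F}_q$ with $x_1+\dots+x_k=b$. $(x)_k=x(x-1)\cdots(x-k+1)$. *)

theory Defs
  imports Complex_Main "HOL-Library.FuncSet" "HOL-Library.Cardinality"
begin

definition M :: "nat \<Rightarrow> 'a::comm_monoid_add \<Rightarrow> 'a set \<Rightarrow> nat" where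
  "M k b D = card {x \<in> {..<k} \<rightarrow>\<^sub>E D. inj_on x {..<k} \<and> (\<Sum>i<k. x i) = b}"

definition falling :: "real \<Rightarrow> nat \<Rightarrow> real" where
  "falling x k = (\<Prod>i<k. x - real i)"

end

theory Submission
  imports Defs
begin

(* Write tuples k b D for the set counted by M k b D.
   (1) Summing over the target b, the sets tuples k b UNIV partition the injective
       k-tuples, of which there are q(q-1)...(q-k+1) (a general count of injective
       extensional functions between finite sets).
   (2) Translating every coordinate by c maps tuples k b UNIV bijectively onto
       tuples k (b + k c) UNIV.  If p does not divide k, then k is a unit in the field,
       so every b is reached from 0: all fibres have the same size, and by (1) that
       size is (q)_k / q.
   (3) If p divides k, then k c = 0 for all c.  Splitting off the last coordinate c
       and subtracting it from the others gives a bijection between tuples k b UNIV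
       and F_q times the (k-1)-tuples of distinct NONZERO elements summing to b
       (the other coordinates differed from c, and their sum changes by -k c = 0). *)

definition tuples :: "nat \<Rightarrow> 'a::comm_monoid_add \<Rightarrow> 'a set \<Rightarrow> (nat \<Rightarrow> 'a) set" where
  "tuples k b D = {x \<in> {..<k} \<rightarrow>\<^sub>E D. inj_on x {..<k} \<and> (\<Sum>i<k. x i) = b}"

lemma M_eq_card_tuples: "M k b D = card (tuples k b D)"
  by (simp add: M_def tuples_def)

(* The number of injections from S into T is the falling factorial (|T|)_{|S|};
   truncated subtraction makes the product vanish when |S| > |T|. *)
lemma card_inj_funcset:
  assumes "finite S" and "finite T"
  shows "card {f \<in> S \<rightarrow>\<^sub>E T. inj_on f S} = (\<Prod>i<card S. card T - i)"
  using assms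
proof (induction S arbitrary: T rule: finite_induct)
  case empty
  show ?case by (simp add: Collect_conv_if PiE_empty_domain)
next
  case (insert x S)
  define Inj where "Inj y = {f \<in> S \<rightarrow>\<^sub>E T - {y}. inj_on f S}" for y
  have fibre: "card (Inj y) = (\<Prod>i<card S. card T - Suc i)" if "y \<in> T" for y
    using insert.IH[of "T - {y}"] insert.prems that
    by (simp add: Inj_def)
  have pairs: "{(y, g). y \<in> T \<and> g \<in> S \<rightarrow>\<^sub>E T - {y} \<and> inj_on g S} = (SIGMA y:T. Inj y)"
    by (auto simp: Inj_def)
  have "card {f \<in> insert x S \<rightarrow>\<^sub>E T. inj_on f (insert x S)}
      = card ((\<lambda>(y, g). g(x := y)) ` (SIGMA y:T. Inj y))"
    using extensional_funcset_extend_domain_inj_on_eq[OF insert.hyps(2), of T, unfolded pairs]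
    by simp
  also have "\<dots> = card (SIGMA y:T. Inj y)"
    using extensional_funcset_extend_domain_inj_onI[OF insert.hyps(2), of T, unfolded pairs]
    by (rule card_image)
  also have "\<dots> = (\<Sum>y\<in>T. card (Inj y))"
    using insert.prems insert.hyps(1) by (simp add: Inj_def finite_PiE)
  also have "\<dots> = card T * (\<Prod>i<card S. card T - Suc i)"
    using fibre by simp
  also have "\<dots> = (\<Prod>i<card (insert x S). card T - i)"
    using insert.hyps by (simp add: prod.lessThan_Suc_shift del: prod.lessThan_Suc)
  finally show ?case .
qed

lemma card_inj_tuples_eq_sum_M:
  "card {x \<in> {..<k} \<rightarrow>\<^sub>E (UNIV::'a::{comm_monoid_add,finite} set). inj_on x {..<k}}
     = (\<Sum>b\<in>UNIV. M k b (UNIV::'a set))"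
proof -
  let ?Inj = "{x \<in> {..<k} \<rightarrow>\<^sub>E (UNIV::'a set). inj_on x {..<k}}"
  have "finite ?Inj"
    by (rule finite_subset[of _ "{..<k} \<rightarrow>\<^sub>E UNIV"]) (auto simp: finite_PiE)
  then have "(\<Sum>b\<in>UNIV. card {x \<in> ?Inj. (\<Sum>i<k. x i) = b}) = card ?Inj"
    using sum.group[of ?Inj UNIV "\<lambda>x. \<Sum>i<k. x i" "\<lambda>_. 1::nat"] by simp
  moreover have "{x \<in> ?Inj. (\<Sum>i<k. x i) = b} = tuples k b UNIV" for b
    by (auto simp: tuples_def)
  ultimately show ?thesis
    by (simp add: M_eq_card_tuples)
qed

definition shift_tuple :: "nat \<Rightarrow> 'a::ab_group_add \<Rightarrow> (nat \<Rightarrow> 'a) \<Rightarrow> nat \<Rightarrow> 'a" where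
  "shift_tuple k c x = restrict (\<lambda>i. x i + c) {..<k}"

lemma shift_tuple_mem:
  fixes x :: "nat \<Rightarrow> 'a::comm_ring_1"
  assumes "x \<in> tuples k b UNIV"
  shows "shift_tuple k c x \<in> tuples k (b + of_nat k * c) UNIV"
proof -
  have "inj_on x {..<k}" and sum_x: "(\<Sum>i<k. x i) = b"
    using assms by (auto simp: tuples_def)
  then have "inj_on (shift_tuple k c x) {..<k}"
    by (auto simp: inj_on_def shift_tuple_def)
  moreover have "(\<Sum>i<k. shift_tuple k c x i) = b + of_nat k * c"
    using sum_x by (simp add: shift_tuple_def sum.distrib)
  ultimately show ?thesis
    by (simp add: tuples_def shift_tuple_def)
qed

lemma shift_tuple_cancel:
  assumes "x \<in> {..<k} \<rightarrow>\<^sub>E UNIV"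
  shows "shift_tuple k (- c) (shift_tuple k c x) = x"
proof
  fix i
  show "shift_tuple k (- c) (shift_tuple k c x) i = x i"
    by (cases "i < k") (simp_all add: shift_tuple_def PiE_arb[OF assms])
qed

lemma M_shift:
  fixes b c :: "'a::comm_ring_1"
  shows "M k (b + of_nat k * c) UNIV = M k b UNIV"
proof -
  have extensional: "x \<in> {..<k} \<rightarrow>\<^sub>E UNIV" if "x \<in> tuples k d UNIV" for x and d :: 'a
    using that by (simp add: tuples_def)
  have "bij_betw (shift_tuple k c) (tuples k b UNIV) (tuples k (b + of_nat k * c) UNIV)"
  proof (rule bij_betw_byWitness[where f' = "shift_tuple k (- c)"])
    show "\<forall>x\<in>tuples k b UNIV. shift_tuple k (- c) (shift_tuple k c x) = x"
      using extensional shift_tuple_cancel by blast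
    show "\<forall>x\<in>tuples k (b + of_nat k * c) UNIV. shift_tuple k c (shift_tuple k (- c) x) = x"
      using extensional shift_tuple_cancel[of _ k "- c"] by (metis minus_minus)
    show "shift_tuple k c ` tuples k b UNIV \<subseteq> tuples k (b + of_nat k * c) UNIV"
      using shift_tuple_mem by blast
    show "shift_tuple k (- c) ` tuples k (b + of_nat k * c) UNIV \<subseteq> tuples k b UNIV"
    proof (rule image_subsetI)
      fix x assume "x \<in> tuples k (b + of_nat k * c) UNIV"
      then show "shift_tuple k (- c) x \<in> tuples k b UNIV"
        using shift_tuple_mem[of x k "b + of_nat k * c" "- c"] by simp
    qed
  qed
  then show ?thesis
    by (simp add: M_eq_card_tuples bij_betw_same_card)
qed

(* If k is invertible, every target b is a translate of 0, so M k b does not depend on b. *)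
lemma M_independent_of_sum:
  fixes b :: "'a::field"
  assumes "of_nat k \<noteq> (0::'a)"
  shows "M k b UNIV = M k 0 (UNIV::'a set)"
  using M_shift[of k 0 "b / of_nat k"] assms by simp

definition split_last :: "nat \<Rightarrow> (nat \<Rightarrow> 'a::ab_group_add) \<Rightarrow> 'a \<times> (nat \<Rightarrow> 'a)" where
  "split_last m x = (x m, restrict (\<lambda>i. x i - x m) {..<m})"

definition join_last :: "nat \<Rightarrow> 'a::ab_group_add \<times> (nat \<Rightarrow> 'a) \<Rightarrow> nat \<Rightarrow> 'a" where
  "join_last m p = (restrict (\<lambda>i. snd p i + fst p) {..<m})(m := fst p)"

lemma join_split_last:
  assumes "x \<in> {..<Suc m} \<rightarrow>\<^sub>E UNIV"
  shows "join_last m (split_last m x) = x"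
proof
  fix i
  consider "i < m" | "i = m" | "i > m" by linarith
  then show "join_last m (split_last m x) i = x i"
    by cases (simp_all add: join_last_def split_last_def PiE_arb[OF assms])
qed

lemma split_join_last:
  assumes "y \<in> {..<m} \<rightarrow>\<^sub>E D"
  shows "split_last m (join_last m (c, y)) = (c, y)"
proof -
  have "restrict (\<lambda>i. join_last m (c, y) i - c) {..<m} = y"
  proof
    fix i show "restrict (\<lambda>i. join_last m (c, y) i - c) {..<m} i = y i"
      by (cases "i < m") (simp_all add: join_last_def PiE_arb[OF assms])
  qed
  then show ?thesis by (simp add: split_last_def join_last_def)
qed

lemma split_last_mem:
  fixes x :: "nat \<Rightarrow> 'a::comm_ring_1"
  assumes char: "of_nat (Suc m) = (0::'a)" and x: "x \<in> tuples (Suc m) b UNIV"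
  shows "snd (split_last m x) \<in> tuples m b (UNIV - {0})"
proof -
  let ?y = "restrict (\<lambda>i. x i - x m) {..<m}"
  have inj: "inj_on x {..<Suc m}" and sum_x: "(\<Sum>i<Suc m. x i) = b"
    using x by (auto simp: tuples_def)
  have "x i \<noteq> x m" if "i < m" for i
    using inj that unfolding inj_on_def by (metis lessThan_iff less_Suc_eq less_irrefl)
  then have "?y \<in> {..<m} \<rightarrow>\<^sub>E UNIV - {0}"
    by auto
  moreover have "inj_on ?y {..<m}"
    using inj by (auto simp: inj_on_def)
  moreover have "(\<Sum>i<m. ?y i) = b"
  proof -
    have "(\<Sum>i<m. ?y i) = (\<Sum>i<Suc m. x i - x m)"
      by simp
    also have "\<dots> = b - of_nat (Suc m) * x m"
      using sum_x by (simp only: sum_subtractf sum_constant card_lessThan)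
    finally show ?thesis
      using char by simp
  qed
  ultimately show ?thesis
    by (simp add: tuples_def split_last_def)
qed

lemma join_last_mem:
  fixes y :: "nat \<Rightarrow> 'a::comm_ring_1"
  assumes char: "of_nat (Suc m) = (0::'a)" and y: "y \<in> tuples m b (UNIV - {0})"
  shows "join_last m (c, y) \<in> tuples (Suc m) b UNIV"
proof -
  let ?x = "join_last m (c, y)"
  have nonzero: "y i \<noteq> 0" if "i < m" for i
    using y that by (auto simp: tuples_def)
  have inj: "inj_on y {..<m}" and sum_y: "(\<Sum>i<m. y i) = b"
    using y by (auto simp: tuples_def)
  have "?x \<in> {..<Suc m} \<rightarrow>\<^sub>E UNIV"
    by (auto simp: join_last_def PiE_def extensional_def)
  moreover have "inj_on ?x (insert m {..<m})"
  proof (rule inj_on_insert[THEN iffD2, OF conjI])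
    show "inj_on ?x {..<m}"
      using inj by (auto simp: inj_on_def join_last_def)
    show "?x m \<notin> ?x ` ({..<m} - {m})"
      using nonzero by (auto simp: join_last_def)
  qed
  moreover have "(\<Sum>i<Suc m. ?x i) = b"
  proof -
    have "(\<Sum>i<Suc m. ?x i) = (\<Sum>i<m. y i + c) + c"
      by (simp add: join_last_def)
    also have "\<dots> = b + of_nat (Suc m) * c"
      using sum_y by (simp add: sum.distrib algebra_simps)
    finally show ?thesis
      using char by simp
  qed
  ultimately show ?thesis
    by (simp add: tuples_def lessThan_Suc)
qed

lemma M_Suc_eq_card_times_M_nonzero:
  assumes char: "of_nat (Suc m) = (0::'a::comm_ring_1)"
  shows "M (Suc m) b (UNIV::'a set) = CARD('a) * M m b (UNIV - {0})"
proof -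
  have "bij_betw (split_last m) (tuples (Suc m) b UNIV) (UNIV \<times> tuples m b (UNIV - {0}))"
  proof (rule bij_betw_byWitness[where f' = "join_last m"])
    show "\<forall>x\<in>tuples (Suc m) b UNIV. join_last m (split_last m x) = x"
      using join_split_last unfolding tuples_def by blast
    show "\<forall>p\<in>UNIV \<times> tuples m b (UNIV - {0}). split_last m (join_last m p) = p"
      using split_join_last unfolding tuples_def by blast
    show "split_last m ` tuples (Suc m) b UNIV \<subseteq> UNIV \<times> tuples m b (UNIV - {0})"
      using split_last_mem[OF char] by (metis SigmaI UNIV_I image_subsetI prod.collapse)
    show "join_last m ` (UNIV \<times> tuples m b (UNIV - {0})) \<subseteq> tuples (Suc m) b UNIV"
      using join_last_mem[OF char] by blast
  qed
  then have "card (tuples (Suc m) b UNIV) = card ((UNIV::'a set) \<times> tuples m b (UNIV - {0}))"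
    by (rule bij_betw_same_card)
  then show ?thesis
    by (simp add: M_eq_card_tuples card_cartesian_product)
qed

lemma falling_of_nat:
  assumes "k \<le> n"
  shows "falling (real n) k = real (\<Prod>i<k. n - i)"
  using assms by (simp add: falling_def of_nat_diff)

(* When k is a unit of the finite field, each of the q equal fibres of the (q)_k
   injective k-tuples has size (q)_k / q. *)
lemma M_eq_falling_div_card:
  fixes b :: "'a::{field,finite}"
  assumes unit: "of_nat k \<noteq> (0::'a)" and "k \<le> CARD('a)"
  shows "real (M k b UNIV) = falling (real CARD('a)) k / real CARD('a)"
proof -
  let ?Inj = "{x \<in> {..<k} \<rightarrow>\<^sub>E (UNIV::'a set). inj_on x {..<k}}"
  have "card ?Inj = (\<Sum>c\<in>UNIV. M k c (UNIV::'a set))"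
    by (rule card_inj_tuples_eq_sum_M)
  also have "\<dots> = (\<Sum>c\<in>(UNIV::'a set). M k b UNIV)"
    by (intro sum.cong refl) (metis M_independent_of_sum[OF unit])
  finally have "card ?Inj = CARD('a) * M k b UNIV"
    by simp
  moreover have "card ?Inj = (\<Prod>i<k. CARD('a) - i)"
    using card_inj_funcset[of "{..<k}" "UNIV::'a set"] by simp
  ultimately have "real CARD('a) * real (M k b UNIV) = falling (real CARD('a)) k"
    using falling_of_nat[OF assms(2)] by (metis of_nat_mult)
  then show ?thesis
    by (simp add: eq_divide_eq mult.commute)
qed

theorem lemma2p3:
  fixes k :: nat
  assumes "1 \<le> k" and "k \<le> CARD('a)"
  shows "(\<not> CHAR('a::{field,finite}) dvd k \<longrightarrow>
            (\<forall>b::'a. M k b UNIV = M k 0 (UNIV::'a set) \<and>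
                     real (M k b UNIV) = falling (real CARD('a)) k / real CARD('a)))
       \<and> (CHAR('a) dvd k \<longrightarrow>
            (\<forall>b::'a. M k b UNIV = CARD('a) * M (k - 1) b (UNIV - {0})))"
proof -
  obtain m where k: "k = Suc m"
    using assms(1) by (cases k) auto
  have "M k b UNIV = M k 0 (UNIV::'a set) \<and>
      real (M k b UNIV) = falling (real CARD('a)) k / real CARD('a)"
    if "\<not> CHAR('a) dvd k" for b :: 'a
  proof -
    have unit: "of_nat k \<noteq> (0::'a)"
      using that by (simp add: of_nat_eq_0_iff_char_dvd)
    show ?thesis
      using M_independent_of_sum[OF unit, of b] M_eq_falling_div_card[OF unit assms(2), of b]
      by simp
  qed
  moreover have "M k b UNIV = CARD('a) * M (k - 1) b (UNIV - {0})"
    if "CHAR('a) dvd k" for b :: 'a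
  proof -
    have "of_nat (Suc m) = (0::'a)"
      using that k by (simp only: of_nat_eq_0_iff_char_dvd)
    then show ?thesis
      using M_Suc_eq_card_times_M_nonzero k by simp
  qed
  ultimately show ?thesis
    by blast
qed

end
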